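(* Let $F:(\mathbb R^n\times\mathbb R,0)\to(\mathbb R^m,0)$, $n\ge m\ge 2$, $F=(f_1,\dots,f_m)$, be an analytic germ satisfying: there exists $0<\theta<1$ such that for every $x_0\in F_0^{-1}(0)\cap\operatorname{Sing}F_0\setminus\{0\}$ there is $c(x_0)>0$ with $\|F(x,t)\|^\theta\le c(x_0)\nu_{F_t}(x)$ for all $(x,t)\notin\operatorname{Sing}\widetilde F$ close enough to $(x_0,0)$. Let $L\in\mathbb N$ with $\theta<\frac{L-1}{L}$, let $X=\{(x,t,s)\in\mathbb R^n\times\mathbb R\times\mathbb R^m: f_i(x,t)=s_i^L,\ i=1,\dots,m\}$ and $\pi:X\to\mathbb R$, $\pi(x,t,s)=t$. Let $x_0\in F_0^{-1}(0)\cap\operatorname{Sing}F_0\setminus\{0\}$ and let $(x_k,t_k,s_k)\in X$ be a sequence with $(x_k,t_k)\notin\operatorname{Sing}\widetilde F$, $(x_k,t_k,s_k)\to(x_0,0,0)$, such that the $n$-dimensional tangent spaces $T_{(x_k,t_k,s_k)}(\pi^{-1}(t_k)\cap X)$ converge in the Grassmannian to a space $T$. Then $T=A\times\{0\}\times\mathbb R^m\subset\mathbb R^n\times\mathbb R\times\mathbb R^m$ for some linear subspace $A\subset\mathbb R^n$ of dimension $n-m$.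
   Context: $F_t=F(\cdot,t)$, $F_0=F(\cdot,0)$, $\widetilde F(x,t)=(F(x,t),t)$. $\nu_{F_t}(x):=\min_{\|a\|=1}\bigl\|\sum_{i=1}^m a_i\operatorname{grad}_x f_i(x,t)\bigr\|$ with $\operatorname{grad}_x f_i=(\partial f_i/\partial x_1,\dots,\partial f_i/\partial x_n)$. $\operatorname{Sing}$ of a map denotes the set where its Jacobian has rank less than the target dimension; note $(x,t)\notin\operatorname{Sing}\widetilde F$ iff $\nu_{F_t}(x)>0$, so near such points $\pi^{-1}(t)\cap X$ is a smooth $n$-dimensional manifold. *)

theory Defs
  imports "HOL-Analysis.Analysis"
begin

text \<open>Real analyticity at a point of a real-valued function on a Euclidean space:
  locally the sum of a (unconditionally, hence absolutely) convergent power series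
  in the coordinates with respect to the standard basis.\<close>
definition real_analytic_at :: "('a::euclidean_space \<Rightarrow> real) \<Rightarrow> 'a \<Rightarrow> bool" where
  "real_analytic_at f p \<longleftrightarrow>
     (\<exists>r>0. \<exists>c :: ('a \<Rightarrow> nat) \<Rightarrow> real. \<forall>y\<in>ball p r.
        ((\<lambda>\<alpha>. c \<alpha> * (\<Prod>b\<in>Basis. ((y - p) \<bullet> b) ^ \<alpha> b)) has_sum f y)
          {\<alpha>. \<forall>b. b \<notin> Basis \<longrightarrow> \<alpha> b = 0})"

definition analytic_map_on :: "'a set \<Rightarrow> ('a::euclidean_space \<Rightarrow> real^'m) \<Rightarrow> bool" where
  "analytic_map_on U F \<longleftrightarrow> (\<forall>p\<in>U. \<forall>i. real_analytic_at (\<lambda>y. F y $ i) p)"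

definition Sing :: "('a::real_normed_vector \<Rightarrow> 'b::real_normed_vector) \<Rightarrow> 'a set" where
  "Sing G = {p. \<not> surj (frechet_derivative G (at p))}"

definition grad_x :: "((real^'n) \<times> real \<Rightarrow> real^'m) \<Rightarrow> 'm \<Rightarrow> real^'n \<Rightarrow> real \<Rightarrow> real^'n" where
  "grad_x F i x t = (\<chi> j. frechet_derivative (\<lambda>y. F (y, t)) (at x) (axis j 1) $ i)"

definition nu :: "((real^'n) \<times> real \<Rightarrow> real^'m) \<Rightarrow> real \<Rightarrow> real^'n \<Rightarrow> real" where
  "nu F t x = Inf {norm (\<Sum>i\<in>UNIV. (a $ i) *\<^sub>R grad_x F i x t) | a :: real^'m. norm a = 1}"

definition Ftilde :: "((real^'n) \<times> real \<Rightarrow> real^'m) \<Rightarrow> (real^'n) \<times> real \<Rightarrow> (real^'m) \<times> real" where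
  "Ftilde F = (\<lambda>(x, t). (F (x, t), t))"

text \<open>Tangent space of a set S at p (tangent cone: limits of secant directions);
  for a C^1 submanifold this is the usual tangent space.\<close>
definition tangent_space :: "'a::real_normed_vector set \<Rightarrow> 'a \<Rightarrow> 'a set" where
  "tangent_space S p = {v. \<exists>y c. (\<forall>k. y k \<in> S \<and> c k > (0::real)) \<and> y \<longlonglongrightarrow> p
                               \<and> (\<lambda>k. c k *\<^sub>R (y k - p)) \<longlonglongrightarrow> v}"

text \<open>Convergence in the Grassmannian, using the Hausdorff distance of unit balls.\<close>
definition grassmann_tendsto :: "(nat \<Rightarrow> 'a::euclidean_space set) \<Rightarrow> 'a set \<Rightarrow> bool" where
  "grassmann_tendsto V T \<longleftrightarrow>
     (\<forall>e>0. \<forall>\<^sub>F k in sequentially.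
        (\<forall>v\<in>V k. norm v \<le> 1 \<longrightarrow> (\<exists>w\<in>T. norm w \<le> 1 \<and> dist v w < e)) \<and>
        (\<forall>w\<in>T. norm w \<le> 1 \<longrightarrow> (\<exists>v\<in>V k. norm v \<le> 1 \<and> dist v w < e)))"

end

theory Submission
  imports Defs
begin

text \<open>At a regular point \<open>(x, t, s)\<close> of the fibre \<open>X \<inter> \<pi>\<^sup>-\<^sup>1(t)\<close>, a vector \<open>(z, 0, w)\<close> is tangent
  whenever \<open>D z = (L s\<^sub>i\<^sup>L\<^sup>-\<^sup>1 w\<^sub>i)\<^sub>i\<close>, where \<open>D\<close> is the \<open>x\<close>-derivative of \<open>F(-, t)\<close>. The least-norm
  solution satisfies \<open>\<nu> \<parallel>z\<parallel> \<le> m L \<parallel>s\<parallel>\<^sub>\<infinity>\<^sup>L\<^sup>-\<^sup>1\<close>, while the Lojasiewicz hypothesis gives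
  \<open>\<parallel>s\<parallel>\<^sub>\<infinity>\<^sup>L\<^sup>\<theta> \<le> \<parallel>F\<parallel>\<^sup>\<theta> \<le> c \<nu>\<close>. Hence \<open>\<parallel>z\<parallel> = O(\<parallel>s\<parallel>\<^sub>\<infinity>\<^sup>L\<^sup>-\<^sup>1\<^sup>-\<^sup>L\<^sup>\<theta>)\<close> tends to 0 because
  \<open>\<theta> < (L - 1) / L\<close>, so every vertical vector \<open>(0, 0, w)\<close> lies in the limit \<open>T\<close>. Tangent vectors
  to fibres of \<open>\<pi>\<close> have vanishing \<open>t\<close>-component, hence so do those of \<open>T\<close>, and \<open>T\<close> splits as
  \<open>A \<times> {0} \<times> \<real>\<^sup>m\<close> with \<open>dim A = n - m\<close>.\<close>

section \<open>Real-analytic maps are differentiable\<close>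

definition multi_indices :: "('a::euclidean_space \<Rightarrow> nat) set" where
  "multi_indices = {\<alpha>. \<forall>b. b \<notin> Basis \<longrightarrow> \<alpha> b = 0}"

definition multidegree :: "('a::euclidean_space \<Rightarrow> nat) \<Rightarrow> nat" where
  "multidegree \<alpha> = (\<Sum>b\<in>Basis. \<alpha> b)"

definition unit_index :: "'a \<Rightarrow> 'a \<Rightarrow> nat" where
  "unit_index b = (\<lambda>b'. if b' = b then 1 else 0)"

lemma multidegree_ge_2:
  fixes \<alpha> :: "'a::euclidean_space \<Rightarrow> nat"
  assumes "\<alpha> \<in> multi_indices" "\<alpha> \<noteq> (\<lambda>_. 0)" "\<alpha> \<notin> unit_index ` Basis"
  shows "2 \<le> multidegree \<alpha>"
proof (rule ccontr)
  assume "\<not> ?thesis"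
  then have le1: "(\<Sum>b\<in>Basis. \<alpha> b) \<le> 1" by (simp add: multidegree_def)
  obtain b0 where b0: "b0 \<in> Basis" "\<alpha> b0 \<noteq> 0"
    using assms(1,2) unfolding multi_indices_def fun_eq_iff by blast
  have "(\<Sum>b\<in>Basis. \<alpha> b) = \<alpha> b0 + (\<Sum>b\<in>Basis - {b0}. \<alpha> b)"
    using b0 by (simp add: sum.remove)
  with le1 b0 have "\<alpha> b0 = 1" "(\<Sum>b\<in>Basis - {b0}. \<alpha> b) = 0" by linarith+
  then have "\<alpha> b0 = 1" "\<forall>b\<in>Basis - {b0}. \<alpha> b = 0" by simp_all
  with assms(1) have "\<alpha> = unit_index b0"
    by (auto simp: unit_index_def multi_indices_def fun_eq_iff)
  with b0 assms(3) show False by blast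
qed

lemma abs_monomial_le:
  fixes v :: "'a::euclidean_space"
  shows "\<bar>\<Prod>b\<in>Basis. (v \<bullet> b) ^ \<alpha> b\<bar> \<le> norm v ^ multidegree \<alpha>"
proof -
  have "\<bar>\<Prod>b\<in>Basis. (v \<bullet> b) ^ \<alpha> b\<bar> = (\<Prod>b\<in>Basis. \<bar>v \<bullet> b\<bar> ^ \<alpha> b)"
    by (simp add: abs_prod power_abs)
  also have "\<dots> \<le> (\<Prod>b\<in>Basis. norm v ^ \<alpha> b)"
    by (intro prod_mono conjI power_mono) (auto simp: Basis_le_norm)
  finally show ?thesis by (simp add: multidegree_def power_sum)
qed

lemma power_le_scaled_square:
  fixes d \<rho> :: real
  assumes "0 \<le> d" "d \<le> \<rho>" "2 \<le> n"
  shows "d ^ n \<le> \<rho> ^ n * (d / \<rho>) ^ 2"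
proof (cases "\<rho> = 0")
  case False
  then have "d ^ n = \<rho> ^ n * (d / \<rho>) ^ n" by (simp add: power_divide)
  also have "\<dots> \<le> \<rho> ^ n * (d / \<rho>) ^ 2"
    using assms by (intro mult_left_mono power_decreasing) (auto simp: divide_le_eq_1)
  finally show ?thesis .
qed (use assms in \<open>auto simp: power_0_left\<close>)

text \<open>Evaluating the power series at the diagonal point \<open>p + \<rho> \<Sum>Basis\<close> turns every monomial
  into \<open>\<rho> ^ multidegree \<alpha>\<close>; summability of real series is absolute.\<close>
lemma power_series_abs_summable:
  fixes p :: "'a::euclidean_space"
  assumes r: "r > 0"
    and sums: "\<And>y. y \<in> ball p r \<Longrightarrow>
      ((\<lambda>\<alpha>. c \<alpha> * (\<Prod>b\<in>Basis. ((y - p) \<bullet> b) ^ \<alpha> b)) has_sum f y) multi_indices"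
  shows "\<exists>\<rho>>0. \<rho> < r \<and> (\<lambda>\<alpha>. \<bar>c \<alpha>\<bar> * \<rho> ^ multidegree \<alpha>) summable_on multi_indices"
proof -
  define \<rho> where "\<rho> = r / (2 * real DIM('a))"
  have \<rho>: "\<rho> > 0" "\<rho> < r"
  proof -
    have "1 < 2 * real DIM('a)" using DIM_positive[where 'a='a] by linarith
    then show "\<rho> > 0" "\<rho> < r" using r by (auto simp: \<rho>_def field_simps)
  qed
  define q where "q = p + \<rho> *\<^sub>R (\<Sum>Basis)"
  have "norm (q - p) \<le> \<rho> * (\<Sum>b\<in>Basis. norm (b::'a))"
    using \<rho> norm_sum[of "\<lambda>b. b" "Basis :: 'a set"] by (simp add: q_def mult_left_mono)
  also have "\<dots> = r / 2" using \<rho> by (simp add: \<rho>_def)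
  finally have "q \<in> ball p r" using r by (simp add: dist_norm norm_minus_commute)
  moreover have "(\<Prod>b\<in>Basis. ((q - p) \<bullet> b) ^ \<alpha> b) = \<rho> ^ multidegree \<alpha>" for \<alpha>
    by (simp add: power_sum q_def multidegree_def)
  ultimately have "(\<lambda>\<alpha>. c \<alpha> * \<rho> ^ multidegree \<alpha>) summable_on multi_indices"
    using sums[of q] by (auto simp: summable_on_def)
  then have "(\<lambda>\<alpha>. norm (c \<alpha> * \<rho> ^ multidegree \<alpha>)) summable_on multi_indices"
    by (rule summable_on_iff_abs_summable_on_real[THEN iffD1])
  then show ?thesis using \<rho> by (auto simp: abs_mult)
qed

lemma monomial_sum_affine_part:
  fixes v :: "'a::euclidean_space"
  shows "(\<Sum>\<alpha>\<in>insert (\<lambda>_. 0) (unit_index ` Basis). c \<alpha> * (\<Prod>b\<in>Basis. (v \<bullet> b) ^ \<alpha> b))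
           = c (\<lambda>_. 0) + (\<Sum>b\<in>Basis. c (unit_index b) * (v \<bullet> b))"
proof -
  have "(\<lambda>_. 0) \<notin> unit_index ` (Basis :: 'a set)"
    by (auto simp: unit_index_def fun_eq_iff split: if_splits)
  moreover have "inj_on unit_index (Basis :: 'a set)"
    by (auto simp: inj_on_def unit_index_def fun_eq_iff)
  ultimately show ?thesis
    by (simp add: sum.reindex, intro sum.cong refl)
       (simp add: unit_index_def if_distrib[of "\<lambda>n. _ ^ n"] cong: if_cong)
qed

lemma power_series_term_bound:
  fixes v :: "'a::euclidean_space"
  assumes "\<alpha> \<in> multi_indices - insert (\<lambda>_. 0) (unit_index ` Basis)" "norm v \<le> \<rho>"
  shows "\<bar>c \<alpha> * (\<Prod>b\<in>Basis. (v \<bullet> b) ^ \<alpha> b)\<bar> \<le> (norm v / \<rho>)\<^sup>2 * (\<bar>c \<alpha>\<bar> * \<rho> ^ multidegree \<alpha>)"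
proof -
  have "2 \<le> multidegree \<alpha>" using assms(1) multidegree_ge_2[of \<alpha>] by blast
  then have "norm v ^ multidegree \<alpha> \<le> \<rho> ^ multidegree \<alpha> * (norm v / \<rho>)\<^sup>2"
    using assms(2) by (intro power_le_scaled_square) auto
  then have "\<bar>\<Prod>b\<in>Basis. (v \<bullet> b) ^ \<alpha> b\<bar> \<le> \<rho> ^ multidegree \<alpha> * (norm v / \<rho>)\<^sup>2"
    using abs_monomial_le[of v \<alpha>] by linarith
  then have "\<bar>c \<alpha>\<bar> * \<bar>\<Prod>b\<in>Basis. (v \<bullet> b) ^ \<alpha> b\<bar> \<le> \<bar>c \<alpha>\<bar> * (\<rho> ^ multidegree \<alpha> * (norm v / \<rho>)\<^sup>2)"
    by (rule mult_left_mono) simp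
  then show ?thesis by (simp add: abs_mult algebra_simps)
qed

lemma norm_has_sum_le_dominating:
  fixes g :: "'a \<Rightarrow> 'b::banach"
  assumes g: "(g has_sum S) B" and k: "(k has_sum K) A" and "B \<subseteq> A"
    and nonneg: "\<And>\<alpha>. \<alpha> \<in> A \<Longrightarrow> 0 \<le> k \<alpha>" and dom: "\<And>\<alpha>. \<alpha> \<in> B \<Longrightarrow> norm (g \<alpha>) \<le> k \<alpha>"
  shows "norm S \<le> K"
proof -
  have "(\<lambda>\<alpha>. norm (g \<alpha>)) summable_on B"
  proof (rule Infinite_Sum.abs_summable_on_comparison_test)
    have "k summable_on B"
      using k \<open>B \<subseteq> A\<close> summable_on_subset_banach summable_on_def by blast
    then show "(\<lambda>\<alpha>. norm (k \<alpha>)) summable_on B"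
      by (rule summable_on_cong[THEN iffD1, rotated]) (use nonneg \<open>B \<subseteq> A\<close> in auto)
    show "norm (g \<alpha>) \<le> norm (k \<alpha>)" if "\<alpha> \<in> B" for \<alpha>
      using dom[OF that] by simp
  qed
  then obtain N where N: "((\<lambda>\<alpha>. norm (g \<alpha>)) has_sum N) B"
    using has_sum_infsum by blast
  have "norm S \<le> N" by (rule norm_has_sum_bound[OF N g])
  also have "N \<le> K"
    by (rule has_sum_mono_neutral[OF N k]) (use dom nonneg \<open>B \<subseteq> A\<close> in auto)
  finally show ?thesis .
qed

lemma real_analytic_at_quadratic_approx:
  fixes f :: "'a::euclidean_space \<Rightarrow> real"
  assumes "real_analytic_at f p"
  shows "\<exists>c0 L A \<rho>. \<rho> > 0 \<and> linear L \<and>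
           (\<forall>y. norm (y - p) \<le> \<rho> \<longrightarrow> \<bar>f y - c0 - L (y - p)\<bar> \<le> A * norm (y - p) ^ 2)"
proof -
  obtain r c where r: "r > 0" and sums: "\<And>y. y \<in> ball p r \<Longrightarrow>
      ((\<lambda>\<alpha>. c \<alpha> * (\<Prod>b\<in>Basis. ((y - p) \<bullet> b) ^ \<alpha> b)) has_sum f y) multi_indices"
    using assms unfolding real_analytic_at_def multi_indices_def by blast
  obtain \<rho> where \<rho>: "\<rho> > 0" "\<rho> < r"
    and "(\<lambda>\<alpha>. \<bar>c \<alpha>\<bar> * \<rho> ^ multidegree \<alpha>) summable_on multi_indices"
    using power_series_abs_summable[OF r sums] by blast
  then obtain A0 where A0: "((\<lambda>\<alpha>. \<bar>c \<alpha>\<bar> * \<rho> ^ multidegree \<alpha>) has_sum A0) multi_indices"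
    using has_sum_infsum by blast
  define J :: "('a \<Rightarrow> nat) set" where "J = insert (\<lambda>_. 0) (unit_index ` Basis)"
  have J: "finite J" "J \<subseteq> multi_indices"
    by (auto simp: J_def multi_indices_def unit_index_def)
  define L where "L v = (\<Sum>b\<in>Basis. c (unit_index b) * (v \<bullet> b))" for v
  have "linear L"
    by (rule linearI) (simp_all add: L_def inner_add_left algebra_simps sum.distrib sum_distrib_left)
  moreover have "\<bar>f y - c (\<lambda>_. 0) - L (y - p)\<bar> \<le> A0 / \<rho>\<^sup>2 * norm (y - p) ^ 2"
    if y: "norm (y - p) \<le> \<rho>" for y
  proof -
    define g where "g \<alpha> = c \<alpha> * (\<Prod>b\<in>Basis. ((y - p) \<bullet> b) ^ \<alpha> b)" for \<alpha>
    have "y \<in> ball p r" using y \<rho> by (simp add: dist_norm norm_minus_commute)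
    then have "(g has_sum f y) multi_indices" unfolding g_def by (rule sums)
    then have "(g has_sum (f y - sum g J)) (multi_indices - J)"
      using has_sum_Diff[OF _ has_sum_finite[OF J(1)] J(2)] by blast
    moreover have "sum g J = c (\<lambda>_. 0) + L (y - p)"
      unfolding J_def g_def L_def by (rule monomial_sum_affine_part)
    ultimately have "(g has_sum (f y - c (\<lambda>_. 0) - L (y - p))) (multi_indices - J)"
      by (simp add: algebra_simps)
    then have "norm (f y - c (\<lambda>_. 0) - L (y - p)) \<le> (norm (y - p) / \<rho>)\<^sup>2 * A0"
      using \<rho> power_series_term_bound[OF _ y] unfolding g_def J_def
      by (intro norm_has_sum_le_dominating[OF _ has_sum_cmult_right[OF A0]]) auto
    then show ?thesis using \<rho> by (simp add: power_divide field_simps)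
  qed
  ultimately show ?thesis using \<rho> by blast
qed

lemma real_analytic_at_has_derivative:
  fixes f :: "'a::euclidean_space \<Rightarrow> real"
  assumes "real_analytic_at f p"
  shows "\<exists>D. (f has_derivative D) (at p)"
proof -
  obtain c0 L A \<rho> where \<rho>: "\<rho> > 0" and lin: "linear L"
    and approx: "\<And>y. norm (y - p) \<le> \<rho> \<Longrightarrow> \<bar>f y - c0 - L (y - p)\<bar> \<le> A * norm (y - p) ^ 2"
    using real_analytic_at_quadratic_approx[OF assms] by blast
  have "f p = c0" using approx[of p] \<rho> linear_0[OF lin] by simp
  have "(f has_derivative L) (at p)"
    unfolding has_derivative_at_alt
  proof (intro conjI allI impI)
    show "bounded_linear L" using lin by (simp add: linear_conv_bounded_linear)
    fix e :: real assume e: "e > 0"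
    define d where "d = min \<rho> (e / (\<bar>A\<bar> + 1))"
    have "norm (f y - f p - L (y - p)) \<le> e * norm (y - p)" if y: "norm (y - p) < d" for y
    proof -
      have "norm (f y - f p - L (y - p)) \<le> A * norm (y - p) ^ 2"
        using approx[of y] y \<open>f p = c0\<close> by (simp add: d_def)
      also have "\<dots> \<le> (\<bar>A\<bar> + 1) * norm (y - p) * norm (y - p)"
        unfolding power2_eq_square mult.assoc by (intro mult_right_mono) auto
      also have "\<dots> \<le> e * norm (y - p)"
        using y by (intro mult_right_mono) (auto simp: d_def field_simps)
      finally show ?thesis .
    qed
    moreover have "d > 0" using e \<rho> by (simp add: d_def)
    ultimately show "\<exists>d>0. \<forall>y. norm (y - p) < d \<longrightarrow> norm (f y - f p - L (y - p)) \<le> e * norm (y - p)"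
      by blast
  qed
  then show ?thesis by blast
qed

lemma has_derivative_vec_lambda:
  fixes F :: "'a::euclidean_space \<Rightarrow> real^'m"
  assumes "\<And>i. ((\<lambda>y. F y $ i) has_derivative D i) (at p)"
  shows "(F has_derivative (\<lambda>v. \<chi> i. D i v)) (at p)"
proof (subst has_derivative_componentwise_within, rule ballI)
  fix b :: "real^'m" assume "b \<in> Basis"
  then obtain i where b: "b = axis i 1" unfolding Basis_vec_def by auto
  show "((\<lambda>y. F y \<bullet> b) has_derivative (\<lambda>v. (\<chi> i. D i v) \<bullet> b)) (at p)"
    using assms[of i] by (simp add: b inner_axis)
qed

lemma analytic_map_on_has_derivative:
  fixes F :: "'a::euclidean_space \<Rightarrow> real^'m"
  assumes "analytic_map_on U F" "p \<in> U"
  shows "\<exists>D. (F has_derivative D) (at p)"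
proof -
  have "\<forall>i. \<exists>D. ((\<lambda>y. F y $ i) has_derivative D) (at p)"
    using assms real_analytic_at_has_derivative unfolding analytic_map_on_def by blast
  then obtain D where "\<And>i. ((\<lambda>y. F y $ i) has_derivative D i) (at p)"
    by metis
  then show ?thesis using has_derivative_vec_lambda by blast
qed

section \<open>The function \<open>\<nu>\<close> and least-norm preimages\<close>

lemma Inf_norm_unit_sphere_le:
  fixes A :: "'a::real_normed_vector \<Rightarrow> 'b::real_normed_vector"
  assumes "linear A"
  shows "Inf {norm (A a) | a. norm a = 1} * norm b \<le> norm (A b)"
proof (cases "b = 0")
  case True
  then show ?thesis using linear_0[OF assms] by simp
next
  case False
  have "Inf {norm (A a) | a. norm a = 1} \<le> norm (A ((1 / norm b) *\<^sub>R b))"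
    using False by (intro cInf_lower bdd_belowI[of _ 0]) auto
  also have "\<dots> = norm (A b) / norm b"
    using False by (simp add: linear_cmul[OF assms])
  finally show ?thesis using False by (simp add: field_simps)
qed

lemma sum_grad_x_eq_adjoint:
  fixes F :: "(real^'n) \<times> real \<Rightarrow> real^'m"
  assumes "linear D" "frechet_derivative (\<lambda>y. F (y, t)) (at x) = D"
  shows "(\<Sum>i\<in>UNIV. (a $ i) *\<^sub>R grad_x F i x t) = adjoint D a"
proof (rule vec_eq_iff[THEN iffD2], rule allI)
  fix j
  have "adjoint D a $ j = D (axis j 1) \<bullet> a"
    using adjoint_works[OF assms(1), of "axis j 1" a] by (simp add: inner_axis')
  then show "(\<Sum>i\<in>UNIV. (a $ i) *\<^sub>R grad_x F i x t) $ j = adjoint D a $ j"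
    by (simp add: grad_x_def assms(2) sum_component inner_vec_def mult.commute)
qed

lemma nu_mult_norm_le_adjoint:
  fixes F :: "(real^'n) \<times> real \<Rightarrow> real^'m"
  assumes "linear D" "frechet_derivative (\<lambda>y. F (y, t)) (at x) = D"
  shows "nu F t x * norm b \<le> norm (adjoint D b)"
  using Inf_norm_unit_sphere_le[OF adjoint_linear[OF assms(1)], of b]
  by (simp add: nu_def sum_grad_x_eq_adjoint[OF assms])

text \<open>The preimage is \<open>D\<^sup>* b\<close> where \<open>D D\<^sup>* b = c\<close>; \<open>D D\<^sup>*\<close> is invertible because \<open>D\<^sup>*\<close> is
  bounded below, and Cauchy-Schwarz on \<open>\<parallel>D\<^sup>* b\<parallel>\<^sup>2 = c \<bullet> b\<close> gives the estimate.\<close>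
lemma linear_preimage_norm_le:
  fixes D :: "'a::euclidean_space \<Rightarrow> 'b::euclidean_space"
  assumes lin: "linear D" and \<nu>: "\<nu> > 0" and bnd: "\<And>b. \<nu> * norm b \<le> norm (adjoint D b)"
  shows "\<exists>z. D z = c \<and> \<nu> * norm z \<le> norm c"
proof -
  define M where "M = D \<circ> adjoint D"
  have linM: "linear M" unfolding M_def using lin by (intro linear_compose adjoint_linear)
  have key: "adjoint D b \<bullet> adjoint D b = M b \<bullet> b" for b
    using adjoint_works[OF lin, of "adjoint D b" b] by (simp add: M_def)
  have "inj M"
  proof (rule linear_inj_on_iff_eq_0[THEN iffD2, OF linM, of UNIV, simplified], intro allI impI)
    fix b assume "M b = 0"
    then have "\<nu> * norm b \<le> 0" using key[of b] bnd[of b] by simp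
    then show "b = 0" using \<nu> by (simp add: mult_le_0_iff)
  qed
  then obtain b where b: "M b = c"
    using linear_injective_imp_surjective[OF linM] by (metis surjD)
  define z where "z = adjoint D b"
  have "norm z ^ 2 \<le> norm c * norm b"
    using key[of b] b norm_cauchy_schwarz[of c b] by (simp add: z_def power2_norm_eq_inner)
  then have "\<nu> * norm z * norm z \<le> norm c * (\<nu> * norm b)"
    using \<nu> by (simp add: power2_eq_square mult_left_mono mult.assoc mult.left_commute)
  also have "\<dots> \<le> norm c * norm z"
    using bnd[of b] by (simp add: z_def mult_left_mono)
  finally have "\<nu> * norm z * norm z \<le> norm c * norm z" .
  then have "\<nu> * norm z \<le> norm c"
    by (cases "z = 0") (simp_all add: mult_right_le_imp_le)
  moreover have "D z = c" using b by (simp add: M_def z_def)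
  ultimately show ?thesis by blast
qed

lemma surj_partial_derivative_if_not_Sing_Ftilde:
  fixes F :: "(real^'n) \<times> real \<Rightarrow> real^'m"
  assumes DF: "(F has_derivative DF) (at (x, t))" and reg: "(x, t) \<notin> Sing (Ftilde F)"
  shows "surj (\<lambda>v. DF (v, 0))"
proof -
  have "Ftilde F = (\<lambda>z. (F z, snd z))" unfolding Ftilde_def by (simp add: case_prod_beta')
  then have "(Ftilde F has_derivative (\<lambda>z. (DF z, snd z))) (at (x, t))"
    by (simp, intro has_derivative_Pair DF has_derivative_snd has_derivative_ident)
  then have surjDF: "surj (\<lambda>z. (DF z, snd z))"
    using reg unfolding Sing_def by (simp add: frechet_derivative_at[symmetric])
  show ?thesis unfolding surj_def
  proof
    fix u
    obtain z where "(u, 0) = (DF z, snd z)" using surjD[OF surjDF, of "(u, 0)"] by blast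
    then have "u = DF (fst z, 0)" by (cases z) simp
    then show "\<exists>v. u = DF (v, 0)" by blast
  qed
qed

section \<open>Tangent vectors to the fibres\<close>

lemma tangent_spaceI_seq:
  fixes p v0 :: "'a::real_normed_vector"
  assumes "\<And>j. p + h j *\<^sub>R v j \<in> S" "\<And>j. h j > 0" "h \<longlonglongrightarrow> 0" "v \<longlonglongrightarrow> v0"
  shows "v0 \<in> tangent_space S p"
proof -
  have "(\<lambda>j. p + h j *\<^sub>R v j) \<longlonglongrightarrow> p + 0 *\<^sub>R v0"
    by (intro tendsto_intros assms)
  moreover have "(\<lambda>j. inverse (h j) *\<^sub>R ((p + h j *\<^sub>R v j) - p)) = v"
    using assms(2) by (simp add: fun_eq_iff less_imp_neq[symmetric])
  ultimately show ?thesis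
    using assms(1,2,4) unfolding tangent_space_def
    by (intro CollectI exI[of _ "\<lambda>j. p + h j *\<^sub>R v j"] exI[of _ "\<lambda>j. inverse (h j)"]) simp
qed

lemma tangent_space_level_set_fst_snd:
  fixes X :: "('a::real_normed_vector \<times> real \<times> 'b::real_normed_vector) set"
  assumes "v \<in> tangent_space {q \<in> X. fst (snd q) = t} (a, t, b)"
  shows "fst (snd v) = 0"
proof -
  obtain y c where y: "\<And>k. y k \<in> {q \<in> X. fst (snd q) = t}"
    and lim: "(\<lambda>k. c k *\<^sub>R (y k - (a, t, b))) \<longlonglongrightarrow> v"
    using assms unfolding tangent_space_def by blast
  have "(\<lambda>k. fst (snd (c k *\<^sub>R (y k - (a, t, b))))) \<longlonglongrightarrow> fst (snd v)"
    by (intro tendsto_fst tendsto_snd lim)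
  moreover have "(\<lambda>k. fst (snd (c k *\<^sub>R (y k - (a, t, b))))) = (\<lambda>k. 0)"
    using y by (auto simp: fun_eq_iff)
  ultimately show ?thesis by (simp add: LIMSEQ_const_iff)
qed

lemma at_right_approx_seq:
  fixes c0 :: "'a::real_normed_vector" and P :: "real \<Rightarrow> 'a \<Rightarrow> bool"
  assumes "\<And>e. e > 0 \<Longrightarrow> \<forall>\<^sub>F h in at_right 0. \<exists>u. norm (u - c0) \<le> e \<and> P h u"
  shows "\<exists>h u. (\<forall>j. h j > 0 \<and> P (h j) (u j)) \<and> h \<longlonglongrightarrow> 0 \<and> u \<longlonglongrightarrow> c0"
proof -
  have "\<exists>p. 0 < fst p \<and> fst p < inverse (real (Suc j)) \<and>
      norm (snd p - c0) \<le> inverse (real (Suc j)) \<and> P (fst p) (snd p)" for j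
  proof -
    obtain b where "b > 0" and b: "\<And>h. 0 < h \<Longrightarrow> h < b \<Longrightarrow>
        \<exists>u. norm (u - c0) \<le> inverse (real (Suc j)) \<and> P h u"
      using assms[of "inverse (real (Suc j))"] by (auto simp: eventually_at_right_field)
    define h where "h = min b (inverse (real (Suc j))) / 2"
    have "inverse (real (Suc j)) > 0" by simp
    then have "0 < h" "h < b" "h < inverse (real (Suc j))"
      using \<open>b > 0\<close> unfolding h_def by linarith+
    then show ?thesis using b[of h] by auto
  qed
  then obtain f where f: "\<And>j. 0 < fst (f j) \<and> fst (f j) < inverse (real (Suc j)) \<and>
      norm (snd (f j) - c0) \<le> inverse (real (Suc j)) \<and> P (fst (f j)) (snd (f j))"
    using choice[of "\<lambda>j p. 0 < fst p \<and> fst p < inverse (real (Suc j)) \<and>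
      norm (snd p - c0) \<le> inverse (real (Suc j)) \<and> P (fst p) (snd p)"] by blast
  define h where "h j = fst (f j)" for j
  define u where "u j = snd (f j)" for j
  have hu: "\<And>j. 0 < h j \<and> h j < inverse (real (Suc j)) \<and>
      norm (u j - c0) \<le> inverse (real (Suc j)) \<and> P (h j) (u j)"
    using f by (simp add: h_def u_def)
  have "h \<longlonglongrightarrow> 0"
    by (rule Lim_null_comparison[OF _ LIMSEQ_inverse_real_of_nat]) (use hu in \<open>auto intro!: always_eventually simp: less_imp_le\<close>)
  moreover have "(\<lambda>j. u j - c0) \<longlonglongrightarrow> 0"
    by (rule Lim_null_comparison[OF _ LIMSEQ_inverse_real_of_nat]) (use hu in \<open>auto intro!: always_eventually\<close>)
  ultimately show ?thesis using hu by (auto simp: LIM_zero_iff)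
qed

lemma has_derivative_difference_quotient_uniform:
  fixes G :: "'a::real_normed_vector \<Rightarrow> 'b::real_normed_vector"
  assumes GD: "(G has_derivative D) (at x)" and "\<eta> > 0"
  shows "\<forall>\<^sub>F h in at_right 0. \<forall>v. norm v \<le> M \<longrightarrow>
           norm ((1 / h) *\<^sub>R (G (x + h *\<^sub>R v) - G x) - D v) \<le> \<eta>"
proof -
  define M' where "M' = max M 1"
  have M': "M' > 0" "M \<le> M'" by (auto simp: M'_def)
  obtain \<delta> where "\<delta> > 0" and \<delta>: "\<And>y. norm (y - x) < \<delta> \<Longrightarrow>
      norm (G y - G x - D (y - x)) \<le> (\<eta> / M') * norm (y - x)"
    using GD \<open>\<eta> > 0\<close> M' unfolding has_derivative_at_alt by (meson divide_pos_pos)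
  have linD: "linear D" using GD by (rule has_derivative_linear)
  have "\<forall>\<^sub>F h in at_right (0::real). 0 < h \<and> h * M' < \<delta>"
    using \<open>\<delta> > 0\<close> M' unfolding eventually_at_right_field
    by (intro exI[of _ "\<delta> / M'"]) (auto simp: field_simps)
  then show ?thesis
  proof (rule eventually_mono, intro allI impI)
    fix h :: real and v :: 'a assume h: "0 < h \<and> h * M' < \<delta>" and v: "norm v \<le> M"
    have hv: "norm (h *\<^sub>R v) \<le> h * M'" using h v M' by (simp add: mult_left_mono)
    have "(1 / h) *\<^sub>R (G (x + h *\<^sub>R v) - G x) - D v = (1 / h) *\<^sub>R (G (x + h *\<^sub>R v) - G x - D (h *\<^sub>R v))"
      using h by (simp add: linear_cmul[OF linD] algebra_simps)
    also have "norm \<dots> = (1 / h) * norm (G (x + h *\<^sub>R v) - G x - D (h *\<^sub>R v))"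
      using h by simp
    also have "\<dots> \<le> (1 / h) * ((\<eta> / M') * norm (h *\<^sub>R v))"
      using \<delta>[of "x + h *\<^sub>R v"] h hv by (intro mult_left_mono) (simp_all del: norm_scaleR)
    also have "\<dots> \<le> (1 / h) * ((\<eta> / M') * (h * M'))"
      using h hv \<open>\<eta> > 0\<close> M' by (intro mult_left_mono) auto
    also have "\<dots> = \<eta>" using h M' by simp
    finally show "norm ((1 / h) *\<^sub>R (G (x + h *\<^sub>R v) - G x) - D v) \<le> \<eta>" .
  qed
qed

lemma brouwer_near_identity:
  fixes \<Phi> :: "'a::euclidean_space \<Rightarrow> 'a"
  assumes "continuous_on (cball a 1) \<Phi>" and close: "\<And>u. u \<in> cball a 1 \<Longrightarrow> norm (\<Phi> u - c) \<le> e"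
    and "norm (c - a) \<le> e" and "2 * e \<le> 1"
  shows "\<exists>u. norm (u - a) \<le> 2 * e \<and> \<Phi> u = u"
proof -
  have dist_le: "norm (\<Phi> u - a) \<le> 2 * e" if "u \<in> cball a 1" for u
    using norm_triangle_ineq[of "\<Phi> u - c" "c - a"] close[OF that] assms(3) by simp
  then have "\<Phi> \<in> cball a 1 \<rightarrow> cball a 1"
    using assms(4) by (force simp: dist_norm norm_minus_commute)
  then obtain u where "u \<in> cball a 1" "\<Phi> u = u"
    using brouwer_ball[OF zero_less_one assms(1)] by blast
  then show ?thesis using dist_le by metis
qed

text \<open>For fixed \<open>h > 0\<close> the equation \<open>G (x + h w(u)) = G x + h b\<close> is the fixed-point problem for
  \<open>\<Phi> u = u - (G (x + h w(u)) - G x) / h + b\<close>, and \<open>D (w u) = u\<close> makes \<open>\<Phi>\<close> uniformly close to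
  the constant \<open>b\<close>; Brouwer's theorem provides the solution.\<close>
lemma solvable_along_direction:
  fixes G :: "'a::real_normed_vector \<Rightarrow> 'b::euclidean_space" and w :: "'b \<Rightarrow> 'a"
  assumes h: "0 < h" "h * M < r" and Gc: "continuous_on (ball x r) G"
    and wc: "continuous_on (cball c0 1) w" and w_bound: "\<And>u. u \<in> cball c0 1 \<Longrightarrow> norm (w u) \<le> M"
    and Dw: "\<And>u. D (w u) = u"
    and quot: "\<And>v. norm v \<le> M \<Longrightarrow> norm ((1 / h) *\<^sub>R (G (x + h *\<^sub>R v) - G x) - D v) \<le> e"
    and b: "norm (b - c0) \<le> e" and e: "2 * e \<le> 1"
  shows "\<exists>u. norm (u - c0) \<le> 2 * e \<and> G (x + h *\<^sub>R w u) = G x + h *\<^sub>R b"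
proof -
  define \<Phi> where "\<Phi> u = u - (1 / h) *\<^sub>R (G (x + h *\<^sub>R w u) - G x) + b" for u
  have in_ball: "x + h *\<^sub>R w u \<in> ball x r" if "u \<in> cball c0 1" for u
  proof -
    have "h * norm (w u) \<le> h * M" by (rule mult_left_mono[OF w_bound[OF that]]) (use h in simp)
    moreover have "dist x (x + h *\<^sub>R w u) = h * norm (w u)" using h by (simp add: dist_norm)
    ultimately show ?thesis using h unfolding mem_ball by linarith
  qed
  have "continuous_on (cball c0 1) (\<lambda>u. G (x + h *\<^sub>R w u))"
    by (rule continuous_on_compose2[OF Gc]) (use wc in_ball in \<open>auto intro!: continuous_intros\<close>)
  then have "continuous_on (cball c0 1) \<Phi>"
    unfolding \<Phi>_def by (intro continuous_intros)
  moreover have "norm (\<Phi> u - b) \<le> e" if "u \<in> cball c0 1" for u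
  proof -
    have "\<Phi> u - b = - ((1 / h) *\<^sub>R (G (x + h *\<^sub>R w u) - G x) - D (w u))"
      by (simp add: \<Phi>_def Dw)
    then show ?thesis using quot[OF w_bound[OF that]] by (simp only: norm_minus_cancel)
  qed
  ultimately obtain u where "norm (u - c0) \<le> 2 * e" "\<Phi> u = u"
    using brouwer_near_identity[of c0 \<Phi> b e] b e by blast
  moreover have "G (x + h *\<^sub>R w u) = G x + h *\<^sub>R b" if "\<Phi> u = u"
  proof -
    have "(1 / h) *\<^sub>R (G (x + h *\<^sub>R w u) - G x) = b"
      using that by (simp add: \<Phi>_def algebra_simps)
    then have "h *\<^sub>R ((1 / h) *\<^sub>R (G (x + h *\<^sub>R w u) - G x)) = h *\<^sub>R b" by simp
    then have "G (x + h *\<^sub>R w u) - G x = h *\<^sub>R b" using h by simp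
    then show ?thesis by (simp add: algebra_simps)
  qed
  ultimately show ?thesis by blast
qed

lemma eventually_solvable_along_direction:
  fixes G :: "'a::real_normed_vector \<Rightarrow> 'b::euclidean_space" and R :: "'b \<Rightarrow> 'a"
    and c :: "real \<Rightarrow> 'b"
  assumes r: "r > 0" and Gc: "continuous_on (ball x r) G" and GD: "(G has_derivative D) (at x)"
    and linR: "linear R" and DR: "\<And>u. D (R u) = u" and Dz: "D z0 = c0"
    and c: "(c \<longlongrightarrow> c0) (at_right 0)" and e: "e > 0"
  shows "\<forall>\<^sub>F h in at_right 0. \<exists>u. norm (u - c0) \<le> e \<and>
           G (x + h *\<^sub>R (z0 + R (u - c0))) = G x + h *\<^sub>R c h"
proof -
  define e' where "e' = min (e / 2) (1 / 2)"
  have e': "e' > 0" "2 * e' \<le> e" "2 * e' \<le> 1" using e by (auto simp: e'_def)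
  obtain B where "B > 0" and B: "\<And>v. norm (R v) \<le> B * norm v"
    using linear_bounded_pos[OF linR] by blast
  define M where "M = norm z0 + B"
  define w where "w u = z0 + R (u - c0)" for u
  have w_bound: "norm (w u) \<le> M" if "u \<in> cball c0 1" for u
  proof -
    have "norm (u - c0) \<le> 1" using that by (simp add: dist_norm norm_minus_commute)
    then have "norm (R (u - c0)) \<le> B"
      using B[of "u - c0"] \<open>B > 0\<close> mult_left_le[of "norm (u - c0)" B] by linarith
    then show ?thesis using norm_triangle_ineq[of z0 "R (u - c0)"] by (simp add: w_def M_def)
  qed
  have wc: "continuous_on (cball c0 1) w"
    unfolding w_def using linR
    by (intro continuous_intros linear_continuous_on_compose) (auto simp: linear_conv_bounded_linear)
  have Dw: "D (w u) = u" for u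
    using has_derivative_linear[OF GD] by (simp add: w_def linear_add DR Dz)
  have "\<forall>\<^sub>F h in at_right 0. (\<forall>v. norm v \<le> M \<longrightarrow>
          norm ((1 / h) *\<^sub>R (G (x + h *\<^sub>R v) - G x) - D v) \<le> e') \<and>
          dist (c h) c0 < e' \<and> 0 < h \<and> h * M < r"
  proof (intro eventually_conj)
    show "\<forall>\<^sub>F h in at_right (0::real). 0 < h" by (rule eventually_at_right_less)
    have "M > 0" using \<open>B > 0\<close> by (simp add: M_def add_nonneg_pos)
    then show "\<forall>\<^sub>F h in at_right 0. h * M < r"
      using r unfolding eventually_at_right_field
      by (intro exI[of _ "r / M"]) (auto simp: field_simps)
  qed (use has_derivative_difference_quotient_uniform[OF GD e'(1)] tendstoD[OF c e'(1)] in auto)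
  then show ?thesis
  proof (rule eventually_mono)
    fix h assume "(\<forall>v. norm v \<le> M \<longrightarrow> norm ((1 / h) *\<^sub>R (G (x + h *\<^sub>R v) - G x) - D v) \<le> e') \<and>
        dist (c h) c0 < e' \<and> 0 < h \<and> h * M < r"
    then obtain u where "norm (u - c0) \<le> 2 * e'" "G (x + h *\<^sub>R w u) = G x + h *\<^sub>R c h"
      using solvable_along_direction[where h=h and e=e' and b="c h", OF _ _ Gc wc w_bound Dw] e'
      by (auto simp: dist_norm)
    then show "\<exists>u. norm (u - c0) \<le> e \<and> G (x + h *\<^sub>R (z0 + R (u - c0))) = G x + h *\<^sub>R c h"
      using e' unfolding w_def by force
  qed
qed

lemma power_difference_quotient_tendsto:
  fixes a b :: real
  shows "((\<lambda>h. ((a + h * b) ^ L - a ^ L) / h) \<longlongrightarrow> real L * a ^ (L - 1) * b) (at_right 0)"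
proof -
  have "((\<lambda>h. (a + h * b) ^ L) has_field_derivative real L * a ^ (L - 1) * b) (at 0)"
    by (auto intro!: derivative_eq_intros)
  then have "((\<lambda>h. ((a + h * b) ^ L - a ^ L) / h) \<longlongrightarrow> real L * a ^ (L - 1) * b) (at 0)"
    unfolding has_field_derivative_iff by simp
  then show ?thesis by (rule tendsto_mono[OF at_le, rotated]) simp
qed

text \<open>The curve \<open>h \<mapsto> s + h w\<close> of \<open>s\<close>-coordinates is lifted to the fibre by solving
  \<open>F(y, t) = ((s\<^sub>i + h w\<^sub>i)\<^sup>L)\<^sub>i\<close> for \<open>y\<close> near \<open>x + h z0\<close>.\<close>
lemma fibre_tangent_vectorI:
  fixes F :: "(real^'n) \<times> real \<Rightarrow> real^'m" and R :: "real^'m \<Rightarrow> real^'n"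
    and X :: "((real^'n) \<times> real \<times> (real^'m)) set"
  assumes X: "X = {(y, \<tau>, \<sigma>). \<forall>i. F (y, \<tau>) $ i = (\<sigma> $ i) ^ L}" and pX: "(x, t, s) \<in> X"
    and r: "r > 0" and Gc: "continuous_on (ball x r) (\<lambda>y. F (y, t))"
    and GD: "((\<lambda>y. F (y, t)) has_derivative D) (at x)"
    and linR: "linear R" and DR: "\<And>u. D (R u) = u"
    and Dz: "D z0 = (\<chi> i. real L * (s $ i) ^ (L - 1) * w $ i)"
  shows "(z0, 0, w) \<in> tangent_space {q \<in> X. fst (snd q) = t} (x, t, s)"
proof -
  define c0 where "c0 = (\<chi> i. real L * (s $ i) ^ (L - 1) * w $ i)"
  define c where "c h = (\<chi> i. ((s $ i + h * w $ i) ^ L - (s $ i) ^ L) / h)" for h :: real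
  have "(c \<longlongrightarrow> c0) (at_right 0)"
    unfolding c_def c0_def by (intro tendsto_vec_lambda power_difference_quotient_tendsto)
  then have "\<forall>\<^sub>F h in at_right 0. \<exists>u. norm (u - c0) \<le> e \<and>
      F (x + h *\<^sub>R (z0 + R (u - c0)), t) = F (x, t) + h *\<^sub>R c h" if "e > 0" for e
    using eventually_solvable_along_direction[OF r Gc GD linR DR Dz[folded c0_def] _ that] by simp
  then obtain h u where hu: "\<forall>j. h j > 0 \<and> F (x + h j *\<^sub>R (z0 + R (u j - c0)), t) = F (x, t) + h j *\<^sub>R c (h j)"
    and "h \<longlonglongrightarrow> 0" "u \<longlonglongrightarrow> c0"
    using at_right_approx_seq[where P="\<lambda>h u. F (x + h *\<^sub>R (z0 + R (u - c0)), t) = F (x, t) + h *\<^sub>R c h"]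
    by blast
  then have h: "\<And>j. h j > 0"
    and lift: "\<And>j. F (x + h j *\<^sub>R (z0 + R (u j - c0)), t) = F (x, t) + h j *\<^sub>R c (h j)"
    by simp_all
  have Fx: "F (x, t) $ i = (s $ i) ^ L" for i using pX X by simp
  have "(x, t, s) + h j *\<^sub>R (z0 + R (u j - c0), 0, w) \<in> {q \<in> X. fst (snd q) = t}" for j
  proof -
    have "F (x + h j *\<^sub>R (z0 + R (u j - c0)), t) $ i = (s $ i + h j * w $ i) ^ L" for i
    proof -
      have "F (x + h j *\<^sub>R (z0 + R (u j - c0)), t) $ i = F (x, t) $ i + h j * c (h j) $ i"
        using arg_cong[OF lift[of j], of "\<lambda>v. v $ i"] by simp
      also have "\<dots> = (s $ i + h j * w $ i) ^ L"
        using h[of j] by (simp add: Fx c_def)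
      finally show ?thesis .
    qed
    then show ?thesis unfolding X by simp
  qed
  moreover have "bounded_linear R" using linR by (simp add: linear_conv_bounded_linear)
  then have "(\<lambda>j. R (u j - c0)) \<longlonglongrightarrow> R (c0 - c0)"
    by (rule bounded_linear.tendsto) (intro tendsto_diff \<open>u \<longlonglongrightarrow> c0\<close> tendsto_const)
  then have "(\<lambda>j. (z0 + R (u j - c0), 0::real, w)) \<longlonglongrightarrow> (z0, 0, w)"
    using linear_0[OF linR] tendsto_add[OF tendsto_const, of "\<lambda>j. R (u j - c0)" 0 sequentially z0]
    by (intro tendsto_Pair tendsto_const) simp_all
  ultimately show ?thesis
    by (rule tangent_spaceI_seq[OF _ h \<open>h \<longlonglongrightarrow> 0\<close>])
qed

section \<open>Short vertical tangent vectors\<close>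

lemma infnorm_attained_cart: "\<exists>i. \<bar>x $ i\<bar> = infnorm (x :: real^'n)"
proof -
  have "infnorm x \<in> (\<lambda>b. \<bar>x \<bullet> b\<bar>) ` Basis"
    unfolding infnorm_Max by (rule Max_in) auto
  then obtain i where "infnorm x = \<bar>x \<bullet> axis i 1\<bar>"
    unfolding Basis_vec_def by auto
  then show ?thesis by (auto simp: inner_axis)
qed

lemma infnorm_power_le_norm:
  fixes s v :: "real^'m"
  assumes "\<And>i. v $ i = (s $ i) ^ L"
  shows "infnorm s ^ L \<le> norm v"
proof -
  obtain i where "\<bar>s $ i\<bar> = infnorm s" using infnorm_attained_cart by blast
  then have "infnorm s ^ L = \<bar>v $ i\<bar>" using assms by (simp add: power_abs)
  also have "\<dots> \<le> norm v" by (rule component_le_norm_cart)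
  finally show ?thesis .
qed

lemma norm_scaled_power_vector_le:
  fixes s w :: "real^'m"
  assumes "norm w \<le> 1"
  shows "norm (\<chi> i. real L * (s $ i) ^ (L - 1) * w $ i) \<le> real CARD('m) * real L * infnorm s ^ (L - 1)"
proof -
  have "norm (\<chi> i. real L * (s $ i) ^ (L - 1) * w $ i) \<le> (\<Sum>i\<in>UNIV. real L * \<bar>s $ i\<bar> ^ (L - 1) * \<bar>w $ i\<bar>)"
    using norm_le_l1_cart[of "\<chi> i. real L * (s $ i) ^ (L - 1) * w $ i"] by (simp add: abs_mult power_abs)
  also have "\<dots> \<le> (\<Sum>i\<in>(UNIV :: 'm set). real L * infnorm s ^ (L - 1) * 1)"
  proof (intro sum_mono mult_mono mult_left_mono power_mono)
    show "\<bar>w $ i\<bar> \<le> 1" for i using component_le_norm_cart[of w i] assms by linarith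
  qed (auto simp: component_le_infnorm_cart infnorm_pos_le)
  finally show ?thesis by simp
qed

lemma lojasiewicz_rescaling:
  fixes \<mu> C \<nu> n K d e :: real
  assumes "0 < \<mu>" "0 \<le> C" "0 \<le> n" "\<mu> powr e \<le> C * \<nu>" "\<nu> * n \<le> K * \<mu> powr d"
  shows "n \<le> C * K * \<mu> powr (d - e)"
proof -
  have "n * \<mu> powr e \<le> n * (C * \<nu>)" using assms(3,4) by (rule mult_left_mono[rotated])
  also have "\<dots> = C * (\<nu> * n)" by simp
  also have "\<dots> \<le> C * (K * \<mu> powr d)" using assms(2,5) by (rule mult_left_mono[rotated])
  also have "\<dots> = (C * K * \<mu> powr (d - e)) * \<mu> powr e"
    using assms(1) by (simp add: powr_diff)
  finally show ?thesis using assms(1) by simp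
qed

lemma analytic_map_on_regular_point:
  fixes F :: "(real^'n) \<times> real \<Rightarrow> real^'m"
  assumes "open U" "(x, t) \<in> U" "analytic_map_on U F" "(x, t) \<notin> Sing (Ftilde F)"
  shows "\<exists>D r. ((\<lambda>y. F (y, t)) has_derivative D) (at x) \<and> surj D \<and>
           r > 0 \<and> continuous_on (ball x r) (\<lambda>y. F (y, t))"
proof -
  obtain DF where DF: "(F has_derivative DF) (at (x, t))"
    using analytic_map_on_has_derivative[OF assms(3,2)] by blast
  have "((\<lambda>y. (y, t)) has_derivative (\<lambda>v. (v, 0))) (at x)"
    by (intro has_derivative_Pair has_derivative_ident has_derivative_const)
  from diff_chain_at[OF this DF]
  have "((\<lambda>y. F (y, t)) has_derivative (\<lambda>v. DF (v, 0))) (at x)" by (simp add: comp_def)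
  moreover have "surj (\<lambda>v. DF (v, 0))"
    using surj_partial_derivative_if_not_Sing_Ftilde[OF DF assms(4)] .
  moreover obtain r where "r > 0" "ball (x, t) r \<subseteq> U"
    using assms(1,2) open_contains_ball by blast
  moreover have "continuous_on (ball x r) (\<lambda>y. F (y, t))" if "ball (x, t) r \<subseteq> U"
  proof (rule continuous_at_imp_continuous_on, rule ballI)
    fix y assume "y \<in> ball x r"
    then have "(y, t) \<in> U" using that by (auto simp: dist_Pair_Pair)
    then have "isCont F (y, t)"
      using analytic_map_on_has_derivative[OF assms(3)] has_derivative_continuous by blast
    then show "isCont (\<lambda>y. F (y, t)) y"
      using continuous_at_compose[of y "\<lambda>y. (y, t)" F] by (simp add: comp_def)
  qed
  ultimately show ?thesis by blast
qed

lemma lojasiewicz_short_preimage: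
  fixes F :: "(real^'n) \<times> real \<Rightarrow> real^'m" and s w :: "real^'m"
  assumes GD: "((\<lambda>y. F (y, t)) has_derivative D) (at x)"
    and Fs: "\<And>i. F (x, t) $ i = (s $ i) ^ L"
    and loj: "norm (F (x, t)) powr \<theta> \<le> C * nu F t x"
    and C: "C > 0" and \<theta>: "\<theta> \<ge> 0" and L: "L \<ge> 2" and w: "norm w \<le> 1"
  shows "\<exists>z. D z = (\<chi> i. real L * (s $ i) ^ (L - 1) * w $ i) \<and>
           norm z \<le> C * (real CARD('m) * real L) * infnorm s powr (real L - 1 - real L * \<theta>)"
proof -
  define c0 where "c0 = (\<chi> i. real L * (s $ i) ^ (L - 1) * w $ i)"
  have linD: "linear D" using GD by (rule has_derivative_linear)
  show ?thesis
  proof (cases "s = 0")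
    case True
    then have "D 0 = c0" using L linear_0[OF linD] by (simp add: c0_def vec_eq_iff)
    then show ?thesis using C by (intro exI[of _ 0]) (simp add: c0_def)
  next
    case False
    then have \<mu>: "infnorm s > 0" by (simp add: infnorm_pos_lt)
    have "infnorm s powr (real L * \<theta>) = (infnorm s ^ L) powr \<theta>"
      using \<mu> by (simp add: powr_realpow[symmetric] powr_powr)
    also have "\<dots> \<le> norm (F (x, t)) powr \<theta>"
      using infnorm_power_le_norm[OF Fs] \<mu> \<theta> by (intro powr_mono2) auto
    finally have Loj: "infnorm s powr (real L * \<theta>) \<le> C * nu F t x" using loj by linarith
    moreover have "0 < infnorm s powr (real L * \<theta>)" using \<mu> by simp
    ultimately have "0 < C * nu F t x" by linarith
    then have "nu F t x > 0" using C by (simp add: zero_less_mult_iff)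
    moreover have "nu F t x * norm b \<le> norm (adjoint D b)" for b
      by (rule nu_mult_norm_le_adjoint[OF linD]) (rule frechet_derivative_at[OF GD, symmetric])
    ultimately obtain z where Dz: "D z = c0" and z: "nu F t x * norm z \<le> norm c0"
      using linear_preimage_norm_le[OF linD] by blast
    have "norm c0 \<le> real CARD('m) * real L * infnorm s powr (real L - 1)"
      using norm_scaled_power_vector_le[OF w, of L s] \<mu> L
      by (simp add: c0_def powr_realpow[symmetric] of_nat_diff)
    then have "norm z \<le> C * (real CARD('m) * real L) * infnorm s powr (real L - 1 - real L * \<theta>)"
      using lojasiewicz_rescaling[OF \<mu> _ _ Loj] z C by simp
    then show ?thesis using Dz by (auto simp: c0_def)
  qed
qed

lemma short_vertical_tangent_vector:
  fixes F :: "(real^'n) \<times> real \<Rightarrow> real^'m"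
    and X :: "((real^'n) \<times> real \<times> (real^'m)) set" and w :: "real^'m"
  assumes X: "X = {(y, \<tau>, \<sigma>). \<forall>i. F (y, \<tau>) $ i = (\<sigma> $ i) ^ L}"
    and pX: "(x, t, s) \<in> X" and U: "open U" "(x, t) \<in> U" and anal: "analytic_map_on U F"
    and reg: "(x, t) \<notin> Sing (Ftilde F)"
    and loj: "norm (F (x, t)) powr \<theta> \<le> C * nu F t x"
    and C: "C > 0" and \<theta>: "\<theta> \<ge> 0" and L: "L \<ge> 2" and w: "norm w \<le> 1"
  shows "\<exists>z. (z, 0, w) \<in> tangent_space {q \<in> X. fst (snd q) = t} (x, t, s) \<and>
           norm z \<le> C * (real CARD('m) * real L) * infnorm s powr (real L - 1 - real L * \<theta>)"
proof -
  obtain D r where GD: "((\<lambda>y. F (y, t)) has_derivative D) (at x)" and "surj D"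
    and r: "r > 0" and Gc: "continuous_on (ball x r) (\<lambda>y. F (y, t))"
    using analytic_map_on_regular_point[OF U anal reg] by blast
  have linD: "linear D" using GD by (rule has_derivative_linear)
  obtain R where linR: "linear R" and "D \<circ> R = id"
    using linear_surjective_right_inverse[OF linD \<open>surj D\<close>] by blast
  then have DR: "D (R u) = u" for u by (simp add: fun_eq_iff)
  have Fs: "F (x, t) $ i = (s $ i) ^ L" for i using pX by (simp add: X)
  show ?thesis
    using lojasiewicz_short_preimage[OF GD Fs loj C \<theta> L w] fibre_tangent_vectorI[OF X pX r Gc GD linR DR]
    by blast
qed

lemma eventually_short_vertical_tangent_vectors:
  fixes F :: "(real^'n) \<times> real \<Rightarrow> real^'m"
    and X :: "((real^'n) \<times> real \<times> (real^'m)) set"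
  assumes X: "X = {(y, \<tau>, \<sigma>). \<forall>i. F (y, \<tau>) $ i = (\<sigma> $ i) ^ L}"
    and U: "open U" "p \<in> U" and anal: "analytic_map_on U F"
    and seqX: "\<And>k. (x k, t k, s k) \<in> X" and seqreg: "\<And>k. (x k, t k) \<notin> Sing (Ftilde F)"
    and xt: "(\<lambda>k. (x k, t k)) \<longlonglongrightarrow> p"
    and loj: "\<forall>\<^sub>F (y, \<tau>) in nhds p. (y, \<tau>) \<notin> Sing (Ftilde F) \<longrightarrow> norm (F (y, \<tau>)) powr \<theta> \<le> C * nu F \<tau> y"
    and C: "C > 0" and \<theta>: "\<theta> \<ge> 0" and L: "L \<ge> 2"
  shows "\<forall>\<^sub>F k in sequentially. \<forall>w. norm w \<le> 1 \<longrightarrow>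
           (\<exists>z. (z, 0, w) \<in> tangent_space {q \<in> X. fst (snd q) = t k} (x k, t k, s k) \<and>
                norm z \<le> C * (real CARD('m) * real L) * infnorm (s k) powr (real L - 1 - real L * \<theta>))"
proof -
  have "\<forall>\<^sub>F k in sequentially. (x k, t k) \<in> U"
    by (rule topological_tendstoD[OF xt U])
  moreover have "\<forall>\<^sub>F k in sequentially. norm (F (x k, t k)) powr \<theta> \<le> C * nu F (t k) (x k)"
    using filterlim_iff[THEN iffD1, OF xt, rule_format, OF loj] by (rule eventually_mono) (use seqreg in simp)
  ultimately show ?thesis
  proof eventually_elim
    case (elim k)
    show ?case
      using short_vertical_tangent_vector[OF X seqX U(1) elim(1) anal seqreg elim(2) C \<theta> L] by blast
  qed
qed

section \<open>Limits in the Grassmannian\<close>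

lemma grassmann_tendsto_limit_mem:
  assumes "closed T" "grassmann_tendsto V T"
    and approx: "\<And>e. e > 0 \<Longrightarrow> \<forall>\<^sub>F k in sequentially. \<exists>u\<in>V k. norm u \<le> 1 \<and> dist u v < e"
  shows "v \<in> T"
proof -
  have "\<exists>z\<in>T. dist z v < e" if "e > 0" for e
  proof -
    have "\<forall>\<^sub>F k in sequentially. \<forall>u\<in>V k. norm u \<le> 1 \<longrightarrow> (\<exists>z\<in>T. norm z \<le> 1 \<and> dist u z < e / 2)"
      using assms(2)[unfolded grassmann_tendsto_def, rule_format, of "e / 2"] that
      by (auto elim: eventually_mono)
    moreover have "\<forall>\<^sub>F k in sequentially. \<exists>u\<in>V k. norm u \<le> 1 \<and> dist u v < e / 2"
      using approx[of "e / 2"] that by simp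
    ultimately have "\<forall>\<^sub>F k in sequentially. (\<forall>u\<in>V k. norm u \<le> 1 \<longrightarrow> (\<exists>z\<in>T. norm z \<le> 1 \<and> dist u z < e / 2))
        \<and> (\<exists>u\<in>V k. norm u \<le> 1 \<and> dist u v < e / 2)"
      by (rule eventually_conj)
    then obtain k where "\<forall>u\<in>V k. norm u \<le> 1 \<longrightarrow> (\<exists>z\<in>T. norm z \<le> 1 \<and> dist u z < e / 2)"
      and "\<exists>u\<in>V k. norm u \<le> 1 \<and> dist u v < e / 2"
      using eventually_happens'[OF sequentially_bot] by blast
    then obtain u z where "z \<in> T" "dist u z < e / 2" "dist u v < e / 2" by blast
    moreover have "dist z v \<le> dist u z + dist u v"
      using dist_triangle[of z v u] by (simp add: dist_commute)
    ultimately show ?thesis by (intro bexI[of _ z]) auto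
  qed
  then show ?thesis using closed_approachable[OF assms(1)] by blast
qed

lemma grassmann_tendsto_fst_snd_eq_0:
  fixes V :: "nat \<Rightarrow> ('a::euclidean_space \<times> real \<times> 'b::euclidean_space) set"
  assumes "subspace T" "grassmann_tendsto V T" and V: "\<And>k u. u \<in> V k \<Longrightarrow> fst (snd u) = 0"
    and "v \<in> T"
  shows "fst (snd v) = 0"
proof (cases "v = 0")
  case False
  define v' where "v' = (1 / norm v) *\<^sub>R v"
  have v': "v' \<in> T" "norm v' = 1"
    using False subspace_scale[OF assms(1,4)] by (simp_all add: v'_def)
  have "\<bar>fst (snd v')\<bar> < e" if "e > 0" for e
  proof -
    have "\<forall>\<^sub>F k in sequentially. \<forall>w\<in>T. norm w \<le> 1 \<longrightarrow> (\<exists>u\<in>V k. norm u \<le> 1 \<and> dist u w < e)"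
      using assms(2)[unfolded grassmann_tendsto_def, rule_format, OF that] by (rule eventually_mono) blast
    then obtain k where "\<forall>w\<in>T. norm w \<le> 1 \<longrightarrow> (\<exists>u\<in>V k. norm u \<le> 1 \<and> dist u w < e)"
      using eventually_happens'[OF sequentially_bot] by blast
    then obtain u where "u \<in> V k" "dist u v' < e" using v' by auto
    have "\<bar>fst (snd v')\<bar> = norm (fst (snd (v' - u)))" using V[OF \<open>u \<in> V k\<close>] by simp
    also have "\<dots> \<le> norm (snd (v' - u))"
      using norm_fst_le[of "fst (snd (v' - u))" "snd (snd (v' - u))"] by (simp only: prod.collapse)
    also have "\<dots> \<le> norm (v' - u)"
      using norm_snd_le[of "snd (v' - u)" "fst (v' - u)"] by (simp only: prod.collapse)
    also have "\<dots> < e" using \<open>dist u v' < e\<close> by (simp add: dist_norm norm_minus_commute)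
    finally show ?thesis .
  qed
  then have "fst (snd v') = 0" by (metis less_irrefl zero_less_abs_iff)
  then show ?thesis using False by (simp add: v'_def)
qed (simp add: zero_prod_def)

text \<open>By linearity of \<open>T\<close> it suffices to treat \<open>\<parallel>w\<parallel> \<le> 1/2\<close>, for which \<open>(z\<^sub>k, 0, w)\<close> eventually
  lies in the unit ball.\<close>
lemma grassmann_tendsto_vertical_mem:
  fixes V :: "nat \<Rightarrow> ('a::euclidean_space \<times> real \<times> 'b::euclidean_space) set"
  assumes T: "subspace T" and conv: "grassmann_tendsto V T" and "\<epsilon> \<longlonglongrightarrow> 0"
    and short: "\<forall>\<^sub>F k in sequentially. \<forall>w. norm w \<le> 1 \<longrightarrow> (\<exists>z. (z, 0, w) \<in> V k \<and> norm z \<le> \<epsilon> k)"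
  shows "(0, 0, w) \<in> T"
proof -
  have half: "(0, 0, w) \<in> T" if w: "norm w \<le> 1 / 2" for w
  proof (rule grassmann_tendsto_limit_mem[OF closed_subspace[OF T] conv])
    fix e :: real assume "e > 0"
    then have "\<forall>\<^sub>F k in sequentially. \<epsilon> k < min e (1 / 2)"
      using order_tendstoD(2)[OF \<open>\<epsilon> \<longlonglongrightarrow> 0\<close>, of "min e (1 / 2)"] by simp
    with short show "\<forall>\<^sub>F k in sequentially. \<exists>u\<in>V k. norm u \<le> 1 \<and> dist u (0, 0, w) < e"
    proof (eventually_elim)
      case (elim k)
      moreover have "norm w \<le> 1" using w by simp
      ultimately obtain z where "(z, 0, w) \<in> V k" "norm z \<le> \<epsilon> k" by blast
      with elim have z: "(z, 0, w) \<in> V k" "norm z < min e (1 / 2)" by simp_all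
      have "norm (z, 0::real, w) \<le> norm z + norm w"
        using norm_Pair_le[of z "(0::real, w)"] by (simp add: norm_Pair)
      then have "norm (z, 0::real, w) \<le> 1" using z w by linarith
      moreover have "dist (z, 0::real, w) (0, 0, w) < e" using z by (simp add: dist_Pair_Pair)
      ultimately show ?case using z(1) by blast
    qed
  qed
  show ?thesis
  proof (cases "w = 0")
    case False
    have "(2 * norm w) *\<^sub>R (0, 0, (1 / (2 * norm w)) *\<^sub>R w) \<in> T"
      using False by (intro subspace_scale[OF T] half) simp
    then show ?thesis using False by simp
  qed (use half in simp)
qed

lemma subspace_eq_Times_of_vertical:
  fixes T :: "('a::euclidean_space \<times> real \<times> 'b::euclidean_space) set"
  assumes T: "subspace T" and mid: "\<And>v. v \<in> T \<Longrightarrow> fst (snd v) = 0" and vert: "\<And>w. (0, 0, w) \<in> T"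
  shows "\<exists>A. subspace A \<and> dim A = dim T - DIM('b) \<and> T = A \<times> ({0} \<times> UNIV)"
proof -
  define A where "A = {v. (v, 0, 0) \<in> T}"
  have "subspace A" unfolding A_def subspace_def
  proof (intro conjI allI ballI)
    show "0 \<in> {v. (v, 0::real, 0::'b) \<in> T}" using subspace_0[OF T] by (simp add: zero_prod_def)
    show "u + v \<in> {v. (v, 0::real, 0::'b) \<in> T}" if "u \<in> {v. (v, 0::real, 0::'b) \<in> T}" "v \<in> {v. (v, 0::real, 0::'b) \<in> T}" for u v
      using subspace_add[OF T, of "(u, 0, 0)" "(v, 0, 0)"] that by simp
    show "c *\<^sub>R u \<in> {v. (v, 0::real, 0::'b) \<in> T}" if "u \<in> {v. (v, 0::real, 0::'b) \<in> T}" for c u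
      using subspace_scale[OF T, of "(u, 0, 0)" c] that by simp
  qed
  have "T = A \<times> ({0} \<times> UNIV)"
  proof (intro set_eqI iffI)
    fix p assume "p \<in> T"
    obtain v \<tau> \<sigma> where p: "p = (v, \<tau>, \<sigma>)" by (cases p) auto
    have "\<tau> = 0" using mid[OF \<open>p \<in> T\<close>] by (simp add: p)
    have "(v, \<tau>, \<sigma>) - (0, 0, \<sigma>) \<in> T"
      using \<open>p \<in> T\<close> unfolding p by (rule subspace_diff[OF T _ vert])
    then show "p \<in> A \<times> ({0} \<times> UNIV)" using \<open>\<tau> = 0\<close> by (simp add: A_def p zero_prod_def)
  next
    fix p :: "'a \<times> real \<times> 'b" assume "p \<in> A \<times> ({0} \<times> UNIV)"
    then obtain v \<sigma> where p: "p = (v, 0, \<sigma>)" and v: "(v, 0, 0) \<in> T" by (auto simp: A_def)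
    have "(v, 0, 0) + (0, 0, \<sigma>) \<in> T" by (rule subspace_add[OF T v vert])
    then show "p \<in> T" by (simp add: p)
  qed
  moreover have "dim ({0::real} \<times> (UNIV :: 'b set)) = DIM('b)"
    by (simp add: dim_Times[OF subspace_single_0 subspace_UNIV])
  moreover have "dim T = dim A + dim ({0::real} \<times> (UNIV :: 'b set))"
    unfolding \<open>T = A \<times> ({0} \<times> UNIV)\<close>
    by (rule dim_Times[OF \<open>subspace A\<close> subspace_Times[OF subspace_single_0 subspace_UNIV]])
  ultimately have "dim T = dim A + DIM('b)" by simp
  then show ?thesis using \<open>subspace A\<close> \<open>T = A \<times> ({0} \<times> UNIV)\<close> by auto
qed

lemma grassmann_limit_eq_Times_of_vertical:
  fixes V :: "nat \<Rightarrow> ('a::euclidean_space \<times> real \<times> 'b::euclidean_space) set"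
  assumes T: "subspace T" and conv: "grassmann_tendsto V T"
    and level: "\<And>k u. u \<in> V k \<Longrightarrow> fst (snd u) = 0" and "\<epsilon> \<longlonglongrightarrow> 0"
    and short: "\<forall>\<^sub>F k in sequentially. \<forall>w. norm w \<le> 1 \<longrightarrow> (\<exists>z. (z, 0, w) \<in> V k \<and> norm z \<le> \<epsilon> k)"
  shows "\<exists>A. subspace A \<and> dim A = dim T - DIM('b) \<and> T = A \<times> ({0} \<times> UNIV)"
  using subspace_eq_Times_of_vertical[OF T grassmann_tendsto_fst_snd_eq_0[OF T conv level]
      grassmann_tendsto_vertical_mem[OF T conv \<open>\<epsilon> \<longlonglongrightarrow> 0\<close> short]] .

lemma lojasiewicz_exponent_gap:
  fixes \<theta> :: real
  assumes "0 < \<theta>" "\<theta> < (real L - 1) / real L"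
  shows "2 \<le> L" "0 < real L - 1 - real L * \<theta>"
proof -
  show "2 \<le> L"
  proof (rule ccontr)
    assume "\<not> 2 \<le> L"
    then have "L = 0 \<or> L = 1" by auto
    then show False using assms by auto
  qed
  then have "\<theta> * real L < real L - 1" using assms(2) by (simp add: pos_less_divide_eq)
  then show "0 < real L - 1 - real L * \<theta>" by (simp add: algebra_simps)
qed

theorem lemma3p4:
  fixes F :: "(real^'n) \<times> real \<Rightarrow> real^'m"
    and U :: "((real^'n) \<times> real) set"
    and \<theta> :: real and L :: nat
    and x0 :: "real^'n"
    and x :: "nat \<Rightarrow> real^'n" and t :: "nat \<Rightarrow> real" and s :: "nat \<Rightarrow> real^'m"
    and X :: "((real^'n) \<times> real \<times> (real^'m)) set"
    and T :: "((real^'n) \<times> real \<times> (real^'m)) set"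
  assumes dims: "CARD('n) \<ge> CARD('m)" "CARD('m) \<ge> 2"
    and U: "open U" "(0, 0) \<in> U"
    and anal: "analytic_map_on U F"
    and F0: "F (0, 0) = 0"
    and theta: "0 < \<theta>" "\<theta> < 1"
    and loj: "\<And>y0. (y0, 0) \<in> U \<Longrightarrow> F (y0, 0) = 0 \<Longrightarrow> y0 \<in> Sing (\<lambda>y. F (y, 0)) \<Longrightarrow> y0 \<noteq> 0 \<Longrightarrow>
               \<exists>c>0. \<forall>\<^sub>F (y, \<tau>) in nhds (y0, 0).
                  (y, \<tau>) \<notin> Sing (Ftilde F) \<longrightarrow> norm (F (y, \<tau>)) powr \<theta> \<le> c * nu F \<tau> y"
    and L: "\<theta> < (real L - 1) / real L"
    and X: "X = {(y, \<tau>, \<sigma>). \<forall>i. F (y, \<tau>) $ i = (\<sigma> $ i) ^ L}"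
    and x0: "(x0, 0) \<in> U" "F (x0, 0) = 0" "x0 \<in> Sing (\<lambda>y. F (y, 0))" "x0 \<noteq> 0"
    and seqX: "\<And>k. (x k, t k, s k) \<in> X"
    and seqreg: "\<And>k. (x k, t k) \<notin> Sing (Ftilde F)"
    and seqlim: "(\<lambda>k. (x k, t k, s k)) \<longlonglongrightarrow> (x0, 0, 0)"
    and tdim: "\<And>k. dim (tangent_space {q \<in> X. fst (snd q) = t k} (x k, t k, s k)) = CARD('n)"
    and Tgr: "subspace T" "dim T = CARD('n)"
    and conv: "grassmann_tendsto (\<lambda>k. tangent_space {q \<in> X. fst (snd q) = t k} (x k, t k, s k)) T"
  shows "\<exists>A :: (real^'n) set. subspace A \<and> dim A = CARD('n) - CARD('m) \<and>
           T = A \<times> ({0} \<times> UNIV)"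
proof -
  note exponent = lojasiewicz_exponent_gap[OF theta(1) L]
  obtain C where "C > 0" and Cev: "\<forall>\<^sub>F (y, \<tau>) in nhds (x0, 0).
      (y, \<tau>) \<notin> Sing (Ftilde F) \<longrightarrow> norm (F (y, \<tau>)) powr \<theta> \<le> C * nu F \<tau> y"
    using loj[OF x0] by blast
  have lim: "x \<longlonglongrightarrow> x0" "t \<longlonglongrightarrow> 0" "s \<longlonglongrightarrow> 0"
    using tendsto_fst[OF seqlim] tendsto_fst[OF tendsto_snd[OF seqlim]] tendsto_snd[OF tendsto_snd[OF seqlim]]
    by simp_all
  define \<epsilon> where "\<epsilon> k = C * (real CARD('m) * real L) * infnorm (s k) powr (real L - 1 - real L * \<theta>)" for k
  have "(\<lambda>k. infnorm (s k)) \<longlonglongrightarrow> 0"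
    using tendsto_infnorm[OF lim(3)] by (simp add: infnorm_0)
  then have "\<epsilon> \<longlonglongrightarrow> 0"
    unfolding \<epsilon>_def using exponent(2)
    by (intro tendsto_mult_right_zero tendsto_zero_powrI) (auto simp: infnorm_pos_le)
  moreover note eventually_short_vertical_tangent_vectors[OF X U(1) x0(1) anal seqX seqreg
      tendsto_Pair[OF lim(1,2)] Cev \<open>C > 0\<close> less_imp_le[OF theta(1)] exponent(1)]
  ultimately show ?thesis
    using grassmann_limit_eq_Times_of_vertical[OF Tgr(1) conv tangent_space_level_set_fst_snd]
    by (simp add: \<epsilon>_def Tgr(2))
qed

end
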